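(* Let $h_1,\dots,h_n$ be $n$ distinct tasks and let $h_i^*\in\mathcal{H}_{\min}(h_i)$ for every $i\in[n]$. Let $\Phi:\{-1,1\}^m\to\mathcal{Z}$ and $g_1,\dots,g_n:\mathcal{Z}\to\mathbb{R}$ be such that $g_i\circ\Phi\in\mathcal{H}(h_i)$ for every $i\in[n]$. Let $\Phi^*=(\Phi^*_1,\dots,\Phi^*_d)\in\mathcal{H}_{\min}(\Phi)$. Then, writing $h^*=(h_1^*,\dots,h_n^* )$ and $g=(g_1,\dots,g_n)$, $$\widehat{\deg}(h^* )-\widehat{\deg}(g\circ\Phi^* )\;\ge\;\sum_{i=1}^n\deg(h_i\mid\Phi^* )-d^2,$$ where $\widehat{\deg}(h^* )=\sum_{i}\deg(h_i^* )$ and $\widehat{\deg}(g\circ\Phi^* )=\sum_i\deg(g_i)+\sum_{j=1}^d\deg(\Phi^*_j)$.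
   Context: Standing setup: integers $m\ge d\ge 1$, $\mathcal{Z}=\{-1,1\}^d$, and $\psi:\mathcal{Z}\to\{-1,1\}^m$ is injective; $\mathcal{X}:=\psi(\mathcal{Z})$. The latent distribution $p$ on $\mathcal{Z}$ has $\mathrm{supp}(p)=\mathcal{Z}$. Every $f:\{-1,1\}^n\to\mathbb{R}$ has a unique expansion $f(x)=\sum_{S\subseteq[n]}\hat f(S)\chi_S(x)$ with $\chi_S(x)=\prod_{i\in S}x_i$; $\deg(f)=\max\{|S|:\hat f(S)\ne0\}$ (degree $0$ for constants). For a multi-output map $f=(f_1,\dots,f_q)$, $\deg(f):=\sum_i\deg(f_i)$. A task is $h:\{-1,1\}^m\to\mathbb{R}$ of which only the values on $\mathcal{X}$ matter; $\mathcal{H}(h):=\{f:\{-1,1\}^m\to\mathbb{R}\mid f=h\text{ on }\mathcal{X}\}$; $\mathcal{H}_{\min}(h)$ is the set of minimum-degree elements of $\mathcal{H}(h)$, whose common degree is written $\deg(\mathcal{H}_{\min}(h))$. For the multi-output $\Phi$, $\mathcal{H}(\Phi)$ is the set of maps $\{-1,1\}^m\to\mathbb{R}^d$ agreeing with $\Phi$ on $\mathcal{X}$, and $\mathcal{H}_{\min}(\Phi)$ its elements minimizing $\sum_j\deg(\cdot_j)$. A composition $g\circ\Phi'$ with $g:\mathcal{Z}\to\mathbb{R}$ is evaluated via the multilinear (Fourier–Walsh) polynomial of $g$; its realization degree is $\widehat{\deg}(g\circ\Phi')=\deg(g)+\deg(\Phi')$, and for a tuple of realizations realization degrees add. Conditional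 degree: for a task $h$ and a representation $\Phi'$ for which some $g$ with $g\circ\Phi'\in\mathcal{H}(h)$ exists, $\deg(h\mid\Phi'):=\deg(\mathcal{H}_{\min}(h))-\max\{\deg(g):g:\mathcal{Z}\to\mathbb{R},\ g\circ\Phi'\in\mathcal{H}(h)\}$. *)

theory Defs
  imports Complex_Main
begin

type_synonym point = "nat \<Rightarrow> real"
type_synonym bfun = "point \<Rightarrow> real"

text \<open>The Boolean cube {-1,1}^n, points represented canonically as functions
  nat => real with coordinates i < n in {-1,1} and coordinates i >= n equal to 1.\<close>
definition cube :: "nat \<Rightarrow> point set" where
  "cube n = {x. (\<forall>i<n. x i = 1 \<or> x i = -1) \<and> (\<forall>i\<ge>n. x i = 1)}"

definition chi :: "nat set \<Rightarrow> point \<Rightarrow> real" where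
  "chi S x = (\<Prod>i\<in>S. x i)"

definition fcoeff :: "nat \<Rightarrow> bfun \<Rightarrow> nat set \<Rightarrow> real" where
  "fcoeff n f S = (\<Sum>x\<in>cube n. f x * chi S x) / 2 ^ n"

definition bdeg :: "nat \<Rightarrow> bfun \<Rightarrow> nat" where
  "bdeg n f = Max ({card S | S. S \<subseteq> {..<n} \<and> fcoeff n f S \<noteq> 0} \<union> {0})"

definition mleval :: "nat \<Rightarrow> bfun \<Rightarrow> point \<Rightarrow> real" where
  "mleval n g y = (\<Sum>S\<in>Pow {..<n}. fcoeff n g S * chi S y)"

text \<open>Composition g o Phi' for a d-output representation Phi' (components Phis j, j<d).\<close>
definition comp_rep :: "nat \<Rightarrow> bfun \<Rightarrow> (nat \<Rightarrow> bfun) \<Rightarrow> bfun" where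
  "comp_rep d g Phis = (\<lambda>x. mleval d g (\<lambda>j. if j < d then Phis j x else 1))"

definition Xset :: "nat \<Rightarrow> (point \<Rightarrow> point) \<Rightarrow> point set" where
  "Xset d psi = psi ` cube d"

definition Hset :: "point set \<Rightarrow> bfun \<Rightarrow> bfun set" where
  "Hset X h = {f. \<forall>x\<in>X. f x = h x}"

definition Hmin :: "nat \<Rightarrow> point set \<Rightarrow> bfun \<Rightarrow> bfun set" where
  "Hmin m X h = {f \<in> Hset X h. \<forall>f'\<in>Hset X h. bdeg m f \<le> bdeg m f'}"

definition Hmin_deg :: "nat \<Rightarrow> point set \<Rightarrow> bfun \<Rightarrow> nat" where
  "Hmin_deg m X h = (LEAST k. \<exists>f\<in>Hset X h. bdeg m f = k)"

definition mdeg :: "nat \<Rightarrow> nat \<Rightarrow> (nat \<Rightarrow> bfun) \<Rightarrow> nat" where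
  "mdeg m d Phis = (\<Sum>j<d. bdeg m (Phis j))"

definition HPhi :: "nat \<Rightarrow> point set \<Rightarrow> (point \<Rightarrow> point) \<Rightarrow> (nat \<Rightarrow> bfun) set" where
  "HPhi d X Phi = {Phis. \<forall>j<d. \<forall>x\<in>X. Phis j x = Phi x j}"

definition HPhi_min :: "nat \<Rightarrow> nat \<Rightarrow> point set \<Rightarrow> (point \<Rightarrow> point) \<Rightarrow> (nat \<Rightarrow> bfun) set" where
  "HPhi_min m d X Phi = {Phis \<in> HPhi d X Phi. \<forall>Q\<in>HPhi d X Phi. mdeg m d Phis \<le> mdeg m d Q}"

definition cond_deg :: "nat \<Rightarrow> nat \<Rightarrow> point set \<Rightarrow> bfun \<Rightarrow> (nat \<Rightarrow> bfun) \<Rightarrow> int" where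
  "cond_deg m d X h Phis =
     int (Hmin_deg m X h) - int (Max {bdeg d g | g. comp_rep d g Phis \<in> Hset X h})"

end

theory Submission
  imports Defs
begin

text \<open>A function on \<open>X \<subseteq> {-1,1}\<^sup>m\<close> with \<open>|X| \<le> 2\<^sup>k\<close> agrees on \<open>X\<close> with a multilinear
  polynomial of degree at most \<open>k\<close>: split \<open>X\<close> by the last coordinate into two slices, and
  write \<open>f = A + x\<^sub>m B\<close>, where \<open>B\<close> only has to be interpolated on the intersection of the
  slices (at most \<open>2\<^sup>k\<^sup>-\<^sup>1\<close> points). Since \<open>|\<X>| \<le> 2\<^sup>d\<close>, every component of a minimum-degree
  realization \<open>\<Phi>\<^sup>*\<close> has degree at most \<open>d\<close>, so \<open>deg \<Phi>\<^sup>* \<le> d\<^sup>2\<close>. Moreover \<open>g\<^sub>i \<circ> \<Phi>\<^sup>*\<close> realizes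
  \<open>h\<^sub>i\<close>, so \<open>deg g\<^sub>i\<close> is at most the maximum in the conditional degree, i.e.
  \<open>deg(h\<^sub>i | \<Phi>\<^sup>*) \<le> deg h\<^sub>i\<^sup>* - deg g\<^sub>i\<close>. Summing gives the claim.\<close>

lemma cube_0: "cube 0 = {\<lambda>_. 1}"
  unfolding cube_def by auto

lemma cube_beyond_dim: "x \<in> cube n \<Longrightarrow> x n = 1"
  unfolding cube_def by auto

lemma fun_upd_dim_in_cube: "x \<in> cube (Suc n) \<Longrightarrow> x(n := 1) \<in> cube n"
  unfolding cube_def by (auto simp: less_Suc_eq_le)

lemma cube_Suc: "cube (Suc n) = (\<lambda>x. x(n := 1)) ` cube n \<union> (\<lambda>x. x(n := -1)) ` cube n"
proof (intro set_eqI iffI)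
  fix x assume x: "x \<in> cube (Suc n)"
  have "x = (x(n := 1))(n := x n)" by simp
  moreover have "x n = 1 \<or> x n = -1" using x unfolding cube_def by auto
  ultimately show "x \<in> (\<lambda>x. x(n := 1)) ` cube n \<union> (\<lambda>x. x(n := -1)) ` cube n"
    using fun_upd_dim_in_cube[OF x] by (metis UnI1 UnI2 image_eqI)
next
  fix x assume "x \<in> (\<lambda>x. x(n := 1)) ` cube n \<union> (\<lambda>x. x(n := -1)) ` cube n"
  then show "x \<in> cube (Suc n)" unfolding cube_def by (auto simp: less_Suc_eq)
qed

lemma inj_on_fun_upd_cube: "inj_on (\<lambda>x. x(n := s)) (cube n)"
  by (rule inj_onI) (metis cube_beyond_dim fun_upd_triv fun_upd_upd)

lemma finite_cube: "finite (cube n)"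
  by (induction n) (auto simp: cube_0 cube_Suc)

lemma sum_cube_Suc:
  "(\<Sum>x\<in>cube (Suc n). F x) = (\<Sum>x\<in>cube n. F (x(n := 1)) + F (x(n := -1)))"
proof -
  have disjoint: "(\<lambda>x. x(n := 1)) ` cube n \<inter> (\<lambda>x. x(n := -1)) ` cube n = {}"
    by (auto dest: fun_cong[where x = n])
  have "(\<Sum>x\<in>cube (Suc n). F x)
      = (\<Sum>x\<in>(\<lambda>x. x(n := 1)) ` cube n. F x) + (\<Sum>x\<in>(\<lambda>x. x(n := -1)) ` cube n. F x)"
    unfolding cube_Suc by (rule sum.union_disjoint) (auto simp: finite_cube disjoint)
  also have "\<dots> = (\<Sum>x\<in>cube n. F (x(n := 1))) + (\<Sum>x\<in>cube n. F (x(n := -1)))"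
    by (simp add: sum.reindex[OF inj_on_fun_upd_cube])
  finally show ?thesis by (simp add: sum.distrib)
qed

lemma card_cube: "card (cube n) = 2 ^ n"
proof (induction n)
  case 0
  then show ?case by (simp add: cube_0)
next
  case (Suc n)
  have "card (cube (Suc n)) = (\<Sum>x\<in>cube (Suc n). 1)" by simp
  also have "\<dots> = (\<Sum>x\<in>cube n. (1::nat) + 1)" by (rule sum_cube_Suc)
  finally show ?case using Suc by simp
qed

lemma chi_fun_upd:
  assumes "finite S"
  shows "chi S (x(n := s)) = (if n \<in> S then s * chi (S - {n}) x else chi S x)"
proof (cases "n \<in> S")
  case True
  have "chi S (x(n := s)) = s * (\<Prod>i\<in>S - {n}. (x(n := s)) i)"
    unfolding chi_def using prod.remove[OF assms True, of "x(n := s)"] by simp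
  also have "(\<Prod>i\<in>S - {n}. (x(n := s)) i) = chi (S - {n}) x"
    unfolding chi_def by (rule prod.cong) auto
  finally show ?thesis using True by (simp del: fun_upd_apply)
next
  case False
  then show ?thesis unfolding chi_def by (auto intro!: prod.cong)
qed

lemma chi_fun_upd_notin: "finite S \<Longrightarrow> n \<notin> S \<Longrightarrow> chi S (x(n := s)) = chi S x"
  by (simp add: chi_fun_upd)

lemma sum_cube_chi_mult_chi:
  "S \<subseteq> {..<n} \<Longrightarrow> T \<subseteq> {..<n} \<Longrightarrow>
   (\<Sum>x\<in>cube n. chi S x * chi T x) = (if S = T then 2 ^ n else 0)"
proof (induction n arbitrary: S T)
  case 0
  then show ?case by (simp add: cube_0 chi_def)
next
  case (Suc n)
  have finite: "finite S" "finite T" using Suc.prems finite_subset by blast+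
  let ?sign = "\<lambda>U. if n \<in> U then -1 else 1 :: real"
  have chi_upd: "chi U (x(n := 1)) = chi (U - {n}) x" "chi U (x(n := -1)) = ?sign U * chi (U - {n}) x"
    if "finite U" "x \<in> cube n" for U x
    using chi_fun_upd[OF that(1), of x n] cube_beyond_dim[OF that(2)]
    by (auto simp: chi_fun_upd_notin[OF that(1)] Diff_insert_absorb)
  have "(\<Sum>x\<in>cube (Suc n). chi S x * chi T x)
      = (\<Sum>x\<in>cube n. (1 + ?sign S * ?sign T) * (chi (S - {n}) x * chi (T - {n}) x))"
    unfolding sum_cube_Suc by (intro sum.cong refl) (simp add: chi_upd finite algebra_simps)
  also have "\<dots> = (1 + ?sign S * ?sign T) * (if S - {n} = T - {n} then 2 ^ n else 0)"
    using Suc.prems by (subst sum_distrib_left[symmetric], subst Suc.IH) auto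
  also have "\<dots> = (if S = T then 2 ^ Suc n else 0)"
  proof -
    have "S = T \<longleftrightarrow> (n \<in> S \<longleftrightarrow> n \<in> T) \<and> S - {n} = T - {n}" by blast
    then show ?thesis by auto
  qed
  finally show ?case .
qed

lemma sum_Pow_chi_mult_chi:
  assumes x: "x \<in> cube n" and y: "y \<in> cube n"
  shows "(\<Sum>S\<in>Pow {..<n}. chi S y * chi S x) = (if y = x then 2 ^ n else 0)"
proof -
  have "(\<Sum>S\<in>Pow {..<n}. chi S y * chi S x)
      = (\<Sum>S\<in>Pow {..<n}. (\<Prod>i\<in>S. y i * x i) * (\<Prod>i\<in>{..<n} - S. 1))"
    unfolding chi_def by (simp add: prod.distrib)
  also have "\<dots> = (\<Prod>i<n. y i * x i + 1)"
    by (rule prod_add[symmetric]) simp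
  also have "\<dots> = (if y = x then 2 ^ n else 0)"
  proof (cases "y = x")
    case True
    have "(\<Prod>i<n. y i * x i + 1) = (\<Prod>i<n. 2::real)"
      using x unfolding True cube_def by (intro prod.cong) auto
    then show ?thesis using True by simp
  next
    case False
    then obtain i where i: "y i \<noteq> x i" by auto
    have "i < n" using i x y unfolding cube_def by (metis (mono_tags, lifting) mem_Collect_eq not_less)
    then have "y i * x i + 1 = 0" using i x y unfolding cube_def by force
    then have "(\<Prod>i<n. y i * x i + 1) = 0" using \<open>i < n\<close> by (meson finite_lessThan lessThan_iff prod_zero)
    then show ?thesis using False by simp
  qed
  finally show ?thesis .
qed

lemma mleval_cube:
  assumes x: "x \<in> cube n"
  shows "mleval n g x = g x"
proof -
  have "mleval n g x = (\<Sum>S\<in>Pow {..<n}. \<Sum>y\<in>cube n. g y * (chi S y * chi S x) / 2 ^ n)"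
    unfolding mleval_def fcoeff_def by (simp add: sum_divide_distrib sum_distrib_right mult.assoc)
  also have "\<dots> = (\<Sum>y\<in>cube n. g y * (\<Sum>S\<in>Pow {..<n}. chi S y * chi S x) / 2 ^ n)"
    by (subst sum.swap) (simp add: sum_divide_distrib sum_distrib_left)
  also have "\<dots> = (\<Sum>y\<in>cube n. if y = x then g x else 0)"
    by (rule sum.cong) (auto simp: sum_Pow_chi_mult_chi x)
  also have "\<dots> = g x" using x finite_cube by simp
  finally show ?thesis .
qed

lemma bdeg_le_dim: "bdeg n f \<le> n"
proof -
  have "{card S | S. S \<subseteq> {..<n} \<and> fcoeff n f S \<noteq> 0} \<union> {0} \<subseteq> {..n}"
    using card_mono[of "{..<n}"] by fastforce
  then show ?thesis unfolding bdeg_def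
    by (intro Max.boundedI) (auto intro: finite_subset)
qed

definition walsh_poly :: "nat \<Rightarrow> (nat set \<Rightarrow> real) \<Rightarrow> point \<Rightarrow> real" where
  "walsh_poly n c x = (\<Sum>S\<in>Pow {..<n}. c S * chi S x)"

lemma walsh_poly_const: "walsh_poly n (\<lambda>S. if S = {} then a else 0) x = a"
proof -
  have "walsh_poly n (\<lambda>S. if S = {} then a else 0) x = (\<Sum>S\<in>Pow {..<n}. if S = {} then a else 0)"
    unfolding walsh_poly_def by (intro sum.cong) (auto simp: chi_def)
  then show ?thesis by simp
qed

lemma walsh_poly_fun_upd_dim: "walsh_poly n c (x(n := s)) = walsh_poly n c x"
  unfolding walsh_poly_def
proof (intro sum.cong refl)
  fix S assume "S \<in> Pow {..<n}"
  then have "finite S" "n \<notin> S" using finite_subset by auto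
  then show "c S * chi S (x(n := s)) = c S * chi S x" by (simp add: chi_fun_upd_notin)
qed

definition join_coeffs :: "nat \<Rightarrow> (nat set \<Rightarrow> real) \<Rightarrow> (nat set \<Rightarrow> real) \<Rightarrow> nat set \<Rightarrow> real" where
  "join_coeffs n cA cB S = (if n \<in> S then cB (S - {n}) else cA S)"

lemma join_coeffs_eq_0:
  assumes "\<forall>S. Suc k < card S \<longrightarrow> cA S = 0" and "\<forall>S. k < card S \<longrightarrow> cB S = 0"
    and "Suc k < card S"
  shows "join_coeffs n cA cB S = 0"
proof (cases "n \<in> S")
  case True
  moreover have "finite S" using assms(3) by (intro card_ge_0_finite) simp
  ultimately have "k < card (S - {n})" using assms(3) by simp
  then show ?thesis using True assms(2) unfolding join_coeffs_def by simp
next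
  case False
  then show ?thesis using assms(1,3) unfolding join_coeffs_def by simp
qed

lemma walsh_poly_join_coeffs:
  "walsh_poly (Suc n) (join_coeffs n cA cB) x = walsh_poly n cA x + x n * walsh_poly n cB x"
proof -
  let ?c = "join_coeffs n cA cB"
  have disjoint: "Pow {..<n} \<inter> insert n ` Pow {..<n} = {}" by auto
  have inj: "inj_on (insert n) (Pow {..<n})"
    by (rule inj_onI) (metis PowD insert_ident lessThan_iff less_irrefl subsetD)
  have "walsh_poly (Suc n) ?c x
      = (\<Sum>S\<in>Pow {..<n}. ?c S * chi S x) + (\<Sum>S\<in>insert n ` Pow {..<n}. ?c S * chi S x)"
    unfolding walsh_poly_def lessThan_Suc Pow_insert
    by (rule sum.union_disjoint) (use disjoint in auto)
  also have "(\<Sum>S\<in>Pow {..<n}. ?c S * chi S x) = walsh_poly n cA x"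
    unfolding walsh_poly_def join_coeffs_def by (intro sum.cong) auto
  also have "(\<Sum>S\<in>insert n ` Pow {..<n}. ?c S * chi S x)
      = (\<Sum>S\<in>Pow {..<n}. ?c (insert n S) * chi (insert n S) x)"
    by (rule sum.reindex[OF inj, unfolded comp_def])
  also have "\<dots> = (\<Sum>S\<in>Pow {..<n}. x n * (cB S * chi S x))"
  proof (intro sum.cong refl)
    fix S assume "S \<in> Pow {..<n}"
    then have "n \<notin> S" "finite S" using finite_subset by auto
    then show "?c (insert n S) * chi (insert n S) x = x n * (cB S * chi S x)"
      unfolding chi_def join_coeffs_def by simp
  qed
  also have "\<dots> = x n * walsh_poly n cB x" unfolding walsh_poly_def by (simp add: sum_distrib_left)
  finally show ?thesis .
qed

lemma fcoeff_walsh_poly: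
  assumes "\<forall>x\<in>cube n. f x = walsh_poly n c x" and T: "T \<subseteq> {..<n}"
  shows "fcoeff n f T = c T"
proof -
  have "(\<Sum>x\<in>cube n. f x * chi T x)
      = (\<Sum>x\<in>cube n. \<Sum>S\<in>Pow {..<n}. c S * (chi S x * chi T x))"
    using assms(1) unfolding walsh_poly_def
    by (intro sum.cong) (auto simp: sum_distrib_right mult.assoc)
  also have "\<dots> = (\<Sum>S\<in>Pow {..<n}. c S * (\<Sum>x\<in>cube n. chi S x * chi T x))"
    by (subst sum.swap) (simp add: sum_distrib_left)
  also have "\<dots> = (\<Sum>S\<in>Pow {..<n}. if S = T then c T * 2 ^ n else 0)"
    using T by (intro sum.cong) (auto simp: sum_cube_chi_mult_chi)
  also have "\<dots> = c T * 2 ^ n" using T by simp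
  finally show ?thesis unfolding fcoeff_def by simp
qed

lemma bdeg_walsh_poly_le:
  assumes "\<forall>x\<in>cube n. f x = walsh_poly n c x" and "\<forall>S. k < card S \<longrightarrow> c S = 0"
  shows "bdeg n f \<le> k"
proof -
  have "{card S | S. S \<subseteq> {..<n} \<and> fcoeff n f S \<noteq> 0} \<union> {0} \<subseteq> {..k}"
    using assms fcoeff_walsh_poly[OF assms(1)] by (auto simp: not_less[symmetric])
  then show ?thesis unfolding bdeg_def
    by (intro Max.boundedI) (auto intro: finite_subset)
qed

section \<open>Interpolation by low-degree polynomials\<close>

definition interpolable :: "nat \<Rightarrow> nat \<Rightarrow> point set \<Rightarrow> bfun \<Rightarrow> bool" where
  "interpolable n k X f \<longleftrightarrow>
     (\<exists>c. (\<forall>S. k < card S \<longrightarrow> c S = 0) \<and> (\<forall>x\<in>X. f x = walsh_poly n c x))"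

lemma interpolable_mono: "interpolable n k X f \<Longrightarrow> k \<le> k' \<Longrightarrow> interpolable n k' X f"
  unfolding interpolable_def by (meson le_less_trans)

lemma interpolable_card_le_1:
  assumes "finite X" and "card X \<le> 1"
  shows "interpolable n 0 X f"
proof -
  obtain x0 where "X \<subseteq> {x0}"
    using assms by (metis card_le_Suc0_iff_eq One_nat_def insertCI subsetI)
  then show ?thesis unfolding interpolable_def
    by (intro exI[of _ "\<lambda>S. if S = {} then f x0 else 0"]) (auto simp: walsh_poly_const)
qed

definition slice :: "point set \<Rightarrow> nat \<Rightarrow> real \<Rightarrow> point set" where
  "slice X n s = (\<lambda>x. x(n := 1)) ` {x\<in>X. x n = s}"

lemma slice_subset_cube: "X \<subseteq> cube (Suc n) \<Longrightarrow> slice X n s \<subseteq> cube n"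
  unfolding slice_def using fun_upd_dim_in_cube by blast

lemma card_slices_le:
  assumes "finite X"
  shows "card (slice X n 1) + card (slice X n (-1)) \<le> card X"
proof -
  have "card (slice X n 1) + card (slice X n (-1)) \<le> card {x\<in>X. x n = 1} + card {x\<in>X. x n = -1}"
    unfolding slice_def by (intro add_mono card_image_le) (use assms in auto)
  also have "\<dots> = card ({x\<in>X. x n = 1} \<union> {x\<in>X. x n = -1})"
    by (rule card_Un_disjoint[symmetric]) (use assms in auto)
  also have "\<dots> \<le> card X" by (rule card_mono[OF assms]) auto
  finally show ?thesis .
qed

lemma card_slices_Int_Un_le:
  assumes "X \<subseteq> cube (Suc n)"
  shows "2 * card (slice X n 1 \<inter> slice X n (-1)) \<le> card X"
    and "card (slice X n 1 \<union> slice X n (-1)) \<le> card X"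
proof -
  let ?P = "slice X n 1" and ?N = "slice X n (-1)"
  have "finite X" "finite ?P" "finite ?N"
    using assms slice_subset_cube[OF assms] finite_cube finite_subset by blast+
  then have "card (?P \<inter> ?N) \<le> card ?P" "card (?P \<inter> ?N) \<le> card ?N"
    and "card ?P + card ?N \<le> card X"
    by (simp_all add: card_mono card_slices_le)
  then show "2 * card (?P \<inter> ?N) \<le> card X" and "card (?P \<union> ?N) \<le> card X"
    using card_Un_le[of ?P ?N] by linarith+
qed

lemma walsh_poly_join_coeffs_interpolates:
  assumes X: "X \<subseteq> cube (Suc n)"
    and B: "\<forall>y\<in>slice X n 1 \<inter> slice X n (-1). (f y - f (y(n := -1))) / 2 = walsh_poly n cB y"
    and A: "\<forall>y\<in>slice X n 1 \<union> slice X n (-1).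
              (if y \<in> slice X n 1 then f y - walsh_poly n cB y
               else f (y(n := -1)) + walsh_poly n cB y) = walsh_poly n cA y"
    and x: "x \<in> X"
  shows "f x = walsh_poly (Suc n) (join_coeffs n cA cB) x"
proof -
  let ?y = "x(n := 1)"
  have expand: "walsh_poly (Suc n) (join_coeffs n cA cB) x
      = walsh_poly n cA ?y + x n * walsh_poly n cB ?y"
    unfolding walsh_poly_join_coeffs walsh_poly_fun_upd_dim ..
  have "x n = 1 \<or> x n = -1" using X x unfolding cube_def by auto
  then show ?thesis
  proof
    assume "x n = 1"
    then have "?y = x" "?y \<in> slice X n 1" unfolding slice_def using x by auto
    moreover have "f ?y - walsh_poly n cB ?y = walsh_poly n cA ?y"
      using bspec[OF A UnI1[OF \<open>?y \<in> slice X n 1\<close>]] \<open>?y \<in> slice X n 1\<close> by (simp only: if_True)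
    ultimately show ?thesis using expand \<open>x n = 1\<close> by simp
  next
    assume "x n = -1"
    then have x_eq: "?y(n := -1) = x" and N: "?y \<in> slice X n (-1)"
      unfolding slice_def using x by auto
    show ?thesis
    proof (cases "?y \<in> slice X n 1")
      case True
      with B N have "(f ?y - f (?y(n := -1))) / 2 = walsh_poly n cB ?y" by blast
      then have "f ?y - f x = 2 * walsh_poly n cB ?y" by (simp only: x_eq) simp
      moreover have "f ?y - walsh_poly n cB ?y = walsh_poly n cA ?y"
        using bspec[OF A UnI1[OF True]] True by (simp only: if_True)
      ultimately show ?thesis using expand \<open>x n = -1\<close> by simp
    next
      case False
      have "f (?y(n := -1)) + walsh_poly n cB ?y = walsh_poly n cA ?y"
        using bspec[OF A UnI2[OF N]] False by (simp only: if_False)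
      then have "f x + walsh_poly n cB ?y = walsh_poly n cA ?y" by (simp only: x_eq)
      then show ?thesis using expand \<open>x n = -1\<close> by simp
    qed
  qed
qed

lemma interpolable_card_le_pow:
  "X \<subseteq> cube n \<Longrightarrow> card X \<le> 2 ^ k \<Longrightarrow> interpolable n k X f"
proof (induction n arbitrary: X k f)
  case (0 X k f)
  have "card X \<le> card (cube 0)" using 0 finite_cube card_mono by blast
  then have "interpolable 0 0 X f"
    using 0 by (intro interpolable_card_le_1) (auto simp: cube_0 intro: finite_subset)
  then show ?case by (rule interpolable_mono) simp
next
  case (Suc n X k f)
  show ?case
  proof (cases k)
    case 0
    have "finite X" using Suc.prems(1) finite_cube finite_subset by blast
    then show ?thesis using Suc.prems(2) 0 by (simp add: interpolable_card_le_1)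
  next
    case (Suc k')
    let ?P = "slice X n 1" and ?N = "slice X n (-1)"
    have sub: "?P \<subseteq> cube n" "?N \<subseteq> cube n" using slice_subset_cube Suc.prems(1) by blast+
    have "card (?P \<inter> ?N) \<le> 2 ^ k'"
      using card_slices_Int_Un_le(1)[OF Suc.prems(1)] Suc.prems(2) Suc by simp
    then have "interpolable n k' (?P \<inter> ?N) (\<lambda>y. (f y - f (y(n := -1))) / 2)"
      using sub by (intro Suc.IH) auto
    then obtain cB where cB: "\<forall>S. k' < card S \<longrightarrow> cB S = 0"
      "\<forall>y\<in>?P \<inter> ?N. (f y - f (y(n := -1))) / 2 = walsh_poly n cB y"
      unfolding interpolable_def by auto
    have "card (?P \<union> ?N) \<le> 2 ^ k"
      using card_slices_Int_Un_le(2)[OF Suc.prems(1)] Suc.prems(2) by simp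
    then have "interpolable n k (?P \<union> ?N) (\<lambda>y. if y \<in> ?P then f y - walsh_poly n cB y
                                              else f (y(n := -1)) + walsh_poly n cB y)"
      using sub by (intro Suc.IH) auto
    then obtain cA where cA: "\<forall>S. k < card S \<longrightarrow> cA S = 0"
      "\<forall>y\<in>?P \<union> ?N. (if y \<in> ?P then f y - walsh_poly n cB y
                       else f (y(n := -1)) + walsh_poly n cB y) = walsh_poly n cA y"
      unfolding interpolable_def by auto
    have degree: "join_coeffs n cA cB S = 0" if "k < card S" for S
      using join_coeffs_eq_0[of k' cA cB S n] cA(1) cB(1) that Suc by simp
    have glued: "f x = walsh_poly (Suc n) (join_coeffs n cA cB) x" if "x \<in> X" for x
      using walsh_poly_join_coeffs_interpolates[OF Suc.prems(1) cB(2) cA(2) that] .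
    show ?thesis unfolding interpolable_def
      by (intro exI[of _ "join_coeffs n cA cB"] conjI allI impI ballI) (fact degree, fact glued)
  qed
qed

section \<open>Degree bounds for realizations\<close>

lemma mdeg_HPhi_min_le:
  assumes "Phis \<in> HPhi_min m d X Phi" and "X \<subseteq> cube m" and "card X \<le> 2 ^ k"
  shows "mdeg m d Phis \<le> d * k"
proof -
  have "\<forall>j. interpolable m k X (\<lambda>x. Phi x j)"
    using interpolable_card_le_pow[OF assms(2,3)] by blast
  then have "\<forall>j. \<exists>c. (\<forall>S. k < card S \<longrightarrow> c S = 0) \<and> (\<forall>x\<in>X. Phi x j = walsh_poly m c x)"
    unfolding interpolable_def by simp
  from choice[OF this] obtain C
    where C: "\<forall>j. (\<forall>S. k < card S \<longrightarrow> C j S = 0) \<and> (\<forall>x\<in>X. Phi x j = walsh_poly m (C j) x)"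
    by blast
  define Q where "Q j = walsh_poly m (C j)" for j
  have "Q \<in> HPhi d X Phi" unfolding HPhi_def Q_def using C by simp
  then have "mdeg m d Phis \<le> mdeg m d Q"
    using assms(1) unfolding HPhi_min_def by blast
  also have "\<dots> \<le> (\<Sum>j<d. k)"
    unfolding mdeg_def Q_def by (intro sum_mono bdeg_walsh_poly_le) (use C in auto)
  finally show ?thesis by simp
qed

lemma comp_rep_in_Hset:
  assumes "Phis \<in> HPhi d X Phi" and "Phi ` X \<subseteq> cube d" and "g \<circ> Phi \<in> Hset X h"
  shows "comp_rep d g Phis \<in> Hset X h"
  unfolding Hset_def
proof (intro CollectI ballI)
  fix x assume x: "x \<in> X"
  have Phi_x: "Phi x \<in> cube d" using assms(2) x by blast
  have "(\<lambda>j. if j < d then Phis j x else 1) = Phi x"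
    using assms(1) x Phi_x unfolding HPhi_def cube_def by auto
  then have "comp_rep d g Phis x = g (Phi x)"
    unfolding comp_rep_def using mleval_cube[OF Phi_x] by simp
  then show "comp_rep d g Phis x = h x" using assms(3) x unfolding Hset_def by simp
qed

lemma Hmin_deg_eq_bdeg: "f \<in> Hmin m X h \<Longrightarrow> Hmin_deg m X h = bdeg m f"
  unfolding Hmin_deg_def Hmin_def by (rule Least_equality) auto

lemma cond_deg_le:
  assumes "f \<in> Hmin m X h" and "comp_rep d g Phis \<in> Hset X h"
  shows "cond_deg m d X h Phis \<le> int (bdeg m f) - int (bdeg d g)"
proof -
  have "finite {bdeg d g | g. comp_rep d g Phis \<in> Hset X h}"
    by (rule finite_subset[of _ "{..d}"]) (use bdeg_le_dim in auto)
  then have "bdeg d g \<le> Max {bdeg d g | g. comp_rep d g Phis \<in> Hset X h}"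
    using assms(2) by (intro Max_ge) auto
  then show ?thesis unfolding cond_deg_def Hmin_deg_eq_bdeg[OF assms(1)] by simp
qed

theorem theorem2:
  fixes m d n :: nat
    and psi :: "point \<Rightarrow> point"
    and Phi :: "point \<Rightarrow> point"
    and h hstar g :: "nat \<Rightarrow> bfun"
    and Phistar :: "nat \<Rightarrow> bfun"
  assumes "1 \<le> d" and "d \<le> m"
    and "inj_on psi (cube d)" and "psi ` cube d \<subseteq> cube m"
    and "Phi ` cube m \<subseteq> cube d"
    and "\<forall>i<n. \<forall>j<n. i \<noteq> j \<longrightarrow> (\<exists>x\<in>Xset d psi. h i x \<noteq> h j x)"
    and "\<forall>i<n. hstar i \<in> Hmin m (Xset d psi) (h i)"
    and "\<forall>i<n. (g i \<circ> Phi) \<in> Hset (Xset d psi) (h i)"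
    and "Phistar \<in> HPhi_min m d (Xset d psi) Phi"
  shows "int (\<Sum>i<n. bdeg m (hstar i))
           - (int (\<Sum>i<n. bdeg d (g i)) + int (mdeg m d Phistar))
         \<ge> (\<Sum>i<n. cond_deg m d (Xset d psi) (h i) Phistar) - int (d ^ 2)"
proof -
  let ?X = "Xset d psi"
  have X_cube: "?X \<subseteq> cube m" using assms(4) unfolding Xset_def .
  have "card ?X \<le> 2 ^ d"
    unfolding Xset_def using card_image_le[OF finite_cube, of psi d] card_cube by simp
  then have "mdeg m d Phistar \<le> d ^ 2"
    using mdeg_HPhi_min_le[OF assms(9) X_cube] by (simp add: power2_eq_square)
  moreover have "cond_deg m d ?X (h i) Phistar \<le> int (bdeg m (hstar i)) - int (bdeg d (g i))"
    if "i < n" for i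
  proof (rule cond_deg_le)
    show "hstar i \<in> Hmin m ?X (h i)" using assms(7) that by blast
    show "comp_rep d (g i) Phistar \<in> Hset ?X (h i)"
      using assms(5,8,9) X_cube that unfolding HPhi_min_def by (intro comp_rep_in_Hset) auto
  qed
  then have "(\<Sum>i<n. cond_deg m d ?X (h i) Phistar)
      \<le> int (\<Sum>i<n. bdeg m (hstar i)) - int (\<Sum>i<n. bdeg d (g i))"
    by (fastforce simp: sum_subtractf[symmetric] intro: sum_mono)
  ultimately show ?thesis by linarith
qed

end
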